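(* Let $\mathcal A$ be a finitely generated group, $X$ a finite generating system, and $\mathcal K$ a cyclic subgroup of prime order. Then in the graph $\Gamma=\mathrm{Sch}(\mathcal A,\mathcal K,X)$, each orbit of $\mathrm{Aut}(\Gamma)$ on vertices is a finite union of $X$-orbits.
   Context: The Schreier graph $\mathrm{Sch}(\mathcal A,\mathcal K,X)$ has vertices the right cosets $\mathcal Kg$ and, for each coset and each $x$ with $x\in X$ or $x^{-1}\in X$, an edge labeled $x$ from $\mathcal Kg$ to $\mathcal Kgx$ whose inverse is the edge labeled $x^{-1}$ from $\mathcal Kgx$. $\mathrm{Aut}(\Gamma)$ is the group of all graph automorphisms (ignoring labels); an $X$-orbit is an orbit on vertices of the subgroup of label-preserving automorphisms. *)

theory Defs
  imports "HOL-Algebra.Algebra" "HOL-Computational_Algebra.Primes"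
begin

text \<open>Schreier graph Sch(A,K,S) as a Serre-style graph: vertices are the right cosets K g,
  edges are pairs (C, x) with C a right coset and x in S or x^{-1} in S; the edge (C,x)
  goes from C to C x, has label x, and its inverse edge is (C x, x^{-1}).\<close>

definition sch_vertices :: "('a, 'b) monoid_scheme \<Rightarrow> 'a set \<Rightarrow> 'a set set" where
  "sch_vertices G K = RCOSETS G K"

definition sch_edges :: "('a, 'b) monoid_scheme \<Rightarrow> 'a set \<Rightarrow> 'a set \<Rightarrow> ('a set \<times> 'a) set" where
  "sch_edges G K S = {(C, x). C \<in> RCOSETS G K \<and> x \<in> carrier G \<and> (x \<in> S \<or> m_inv G x \<in> S)}"

definition sch_src :: "('a set \<times> 'a) \<Rightarrow> 'a set" where
  "sch_src e = fst e"

definition sch_tgt :: "('a, 'b) monoid_scheme \<Rightarrow> ('a set \<times> 'a) \<Rightarrow> 'a set" where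
  "sch_tgt G e = r_coset G (fst e) (snd e)"

definition sch_rev :: "('a, 'b) monoid_scheme \<Rightarrow> ('a set \<times> 'a) \<Rightarrow> ('a set \<times> 'a)" where
  "sch_rev G e = (r_coset G (fst e) (snd e), m_inv G (snd e))"

definition sch_label :: "('a set \<times> 'a) \<Rightarrow> 'a" where
  "sch_label e = snd e"

definition sch_aut ::
  "('a, 'b) monoid_scheme \<Rightarrow> 'a set \<Rightarrow> 'a set \<Rightarrow> ('a set \<Rightarrow> 'a set) \<Rightarrow> ('a set \<times> 'a \<Rightarrow> 'a set \<times> 'a) \<Rightarrow> bool" where
  "sch_aut G K S f g \<longleftrightarrow>
     bij_betw f (sch_vertices G K) (sch_vertices G K) \<and>
     bij_betw g (sch_edges G K S) (sch_edges G K S) \<and>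
     (\<forall>e \<in> sch_edges G K S.
        sch_src (g e) = f (sch_src e) \<and>
        sch_tgt G (g e) = f (sch_tgt G e) \<and>
        sch_rev G (g e) = g (sch_rev G e))"

definition sch_label_aut ::
  "('a, 'b) monoid_scheme \<Rightarrow> 'a set \<Rightarrow> 'a set \<Rightarrow> ('a set \<Rightarrow> 'a set) \<Rightarrow> ('a set \<times> 'a \<Rightarrow> 'a set \<times> 'a) \<Rightarrow> bool" where
  "sch_label_aut G K S f g \<longleftrightarrow>
     sch_aut G K S f g \<and> (\<forall>e \<in> sch_edges G K S. sch_label (g e) = sch_label e)"

definition aut_orbit :: "('a, 'b) monoid_scheme \<Rightarrow> 'a set \<Rightarrow> 'a set \<Rightarrow> 'a set \<Rightarrow> 'a set set" where
  "aut_orbit G K S v = {f v | f g. sch_aut G K S f g}"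

definition S_orbit :: "('a, 'b) monoid_scheme \<Rightarrow> 'a set \<Rightarrow> 'a set \<Rightarrow> 'a set \<Rightarrow> 'a set set" where
  "S_orbit G K S v = {f v | f g. sch_label_aut G K S f g}"

end

theory Submission
  imports Defs
begin

text \<open>
  Let \<open>T\<close> be the symmetrised generating set, and let the ball of radius \<open>r\<close> about a vertex
  \<open>C\<close> be the set of cosets \<open>C w\<close> with \<open>w\<close> a product of at most \<open>r\<close> elements of \<open>T\<close>.
  Graph automorphisms map balls onto balls of the same radius, so all vertices of an
  \<open>Aut(\<Gamma>)\<close>-orbit have balls of equal size.

  The stabiliser of the vertex \<open>K a\<close> under right multiplication is \<open>a\<inverse> K a\<close>, of prime order.
  Choose a nontrivial \<open>c\<close> in it and \<open>r\<close> such that \<open>c\<close> is a word of length at most \<open>r\<close>;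
  then \<open>w \<mapsto> (K a) w\<close> is not injective on these words, hence neither at any vertex \<open>u\<close> of the
  orbit, i.e. the stabiliser of \<open>u\<close> contains a nontrivial element of the finite set \<open>P\<close> of
  quotients \<open>w\<^sub>1 w\<^sub>2\<inverse>\<close> of such words. Stabilisers of prime order sharing a nontrivial element
  coincide, and two vertices \<open>K a\<close>, \<open>K b\<close> with equal stabilisers are exchanged by left
  multiplication with \<open>b a\<inverse>\<close>, which normalises \<open>K\<close> and is therefore a label-preserving
  automorphism. So one representative for each element of \<open>P\<close> suffices.
\<close>

definition sym_gens :: "('a, 'b) monoid_scheme \<Rightarrow> 'a set \<Rightarrow> 'a set" where
  "sym_gens G S = {x \<in> carrier G. x \<in> S \<or> inv\<^bsub>G\<^esub> x \<in> S}"

fun words_upto :: "('a, 'b) monoid_scheme \<Rightarrow> 'a set \<Rightarrow> nat \<Rightarrow> 'a set" where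
  "words_upto G T 0 = {\<one>\<^bsub>G\<^esub>}"
| "words_upto G T (Suc r) =
     words_upto G T r \<union> {w \<otimes>\<^bsub>G\<^esub> x | w x. w \<in> words_upto G T r \<and> x \<in> T}"

definition sch_ball :: "('a, 'b) monoid_scheme \<Rightarrow> 'a set \<Rightarrow> 'a set \<Rightarrow> nat \<Rightarrow> 'a set set" where
  "sch_ball G T C r = (\<lambda>w. C #>\<^bsub>G\<^esub> w) ` words_upto G T r"

definition coset_stab :: "('a, 'b) monoid_scheme \<Rightarrow> 'a set \<Rightarrow> 'a set" where
  "coset_stab G C = {x \<in> carrier G. C #>\<^bsub>G\<^esub> x = C}"

definition word_quotients :: "('a, 'b) monoid_scheme \<Rightarrow> 'a set \<Rightarrow> 'a set" where
  "word_quotients G W = {w1 \<otimes>\<^bsub>G\<^esub> inv\<^bsub>G\<^esub> w2 | w1 w2. w1 \<in> W \<and> w2 \<in> W \<and> w1 \<noteq> w2}"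

context group
begin

lemma inv_mult_cancel_left: "a \<in> carrier G \<Longrightarrow> x \<in> carrier G \<Longrightarrow> inv a \<otimes> (a \<otimes> x) = x"
  by (simp add: m_assoc [symmetric])

lemma mult_inv_cancel_left: "a \<in> carrier G \<Longrightarrow> x \<in> carrier G \<Longrightarrow> a \<otimes> (inv a \<otimes> x) = x"
  by (simp add: m_assoc [symmetric])

lemma prime_order_subgroup_subset:
  assumes H: "subgroup H G" and p: "Factorial_Ring.prime (card H)" and H': "subgroup H' G"
    and x: "x \<in> H" "x \<in> H'" "x \<noteq> \<one>"
  shows "H \<subseteq> H'"
proof -
  have fin: "finite H"
    using prime_gt_0_nat[OF p] by (simp add: card_gt_0_iff)
  have I: "subgroup (H \<inter> H') (G\<lparr>carrier := H\<rparr>)"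
    using subgroup_incl[OF subgroups_Inter_pair[OF H H'] H] by blast
  have "card (rcosets\<^bsub>G\<lparr>carrier := H\<rparr>\<^esub> (H \<inter> H')) * card (H \<inter> H') = card H"
    using group.lagrange[OF subgroup_imp_group[OF H] I] by (simp add: order_def)
  then have "card (H \<inter> H') dvd card H" by (metis dvd_triv_right)
  moreover have "card {\<one>, x} \<le> card (H \<inter> H')"
    using fin x H H' subgroup.one_closed by (intro card_mono) auto
  then have "card (H \<inter> H') \<noteq> 1"
    using x(3) by auto
  ultimately have "card (H \<inter> H') = card H"
    using p unfolding prime_nat_iff by blast
  then have "H \<inter> H' = H"
    using card_subset_eq[OF fin] by blast
  then show ?thesis by blast
qed

subsection \<open>Words and balls\<close>

lemma finite_sym_gens:
  assumes "finite S"
  shows "finite (sym_gens G S)"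
proof -
  have "sym_gens G S \<subseteq> S \<union> (\<lambda>x. inv x) ` S"
    by (auto simp: sym_gens_def) (metis image_eqI inv_inv)
  with assms show ?thesis
    by (meson finite_Un finite_imageI finite_subset)
qed

lemma sym_gens_subset_carrier: "sym_gens G S \<subseteq> carrier G"
  by (auto simp: sym_gens_def)

lemma sch_edges_eq: "sch_edges G K S = (rcosets K) \<times> sym_gens G S"
  by (auto simp: sch_edges_def sym_gens_def)

lemma words_upto_subset_carrier: "T \<subseteq> carrier G \<Longrightarrow> words_upto G T r \<subseteq> carrier G"
  by (induction r) auto

lemma finite_words_upto: "finite T \<Longrightarrow> finite (words_upto G T r)"
proof (induction r)
  case (Suc r)
  have "{w \<otimes> x | w x. w \<in> words_upto G T r \<and> x \<in> T} = (\<lambda>(w, x). w \<otimes> x) ` (words_upto G T r \<times> T)"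
    by auto
  with Suc show ?case by auto
qed simp

lemma words_upto_mono: "r \<le> r' \<Longrightarrow> words_upto G T r \<subseteq> words_upto G T r'"
  by (induction r' rule: dec_induct) auto

lemma one_in_words_upto: "\<one> \<in> words_upto G T r"
  using words_upto_mono[of 0 r T] by auto

lemma words_upto_mult:
  assumes "T \<subseteq> carrier G" "a \<in> words_upto G T ra"
  shows "b \<in> words_upto G T rb \<Longrightarrow> a \<otimes> b \<in> words_upto G T (ra + rb)"
proof (induction rb arbitrary: b)
  case 0
  have "a \<in> carrier G" using assms words_upto_subset_carrier by blast
  with 0 assms(2) show ?case by simp
next
  case (Suc rb)
  from Suc.prems consider "b \<in> words_upto G T rb"
    | w x where "b = w \<otimes> x" "w \<in> words_upto G T rb" "x \<in> T"
    by auto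
  then show ?case
  proof cases
    case 1
    then show ?thesis using Suc.IH words_upto_mono[of "ra + rb" "ra + Suc rb" T] by auto
  next
    case 2
    have "a \<in> carrier G" "w \<in> carrier G" "x \<in> carrier G"
      using assms 2 words_upto_subset_carrier by blast+
    with 2 have "a \<otimes> b = (a \<otimes> w) \<otimes> x" by (simp add: m_assoc)
    with 2 Suc.IH show ?thesis by auto
  qed
qed

lemma generate_imp_in_words_upto:
  assumes "S \<subseteq> carrier G" "a \<in> generate G S"
  shows "\<exists>r. a \<in> words_upto G (sym_gens G S) r"
  using assms(2)
proof (induction rule: generate.induct)
  case one
  show ?case using one_in_words_upto by blast
next
  case (incl h)
  then have "h \<in> words_upto G (sym_gens G S) 1"
    using assms(1) by (force simp: sym_gens_def)
  then show ?case by blast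
next
  case (inv h)
  then have "inv h \<in> words_upto G (sym_gens G S) 1"
    using assms(1) by (force simp: sym_gens_def)
  then show ?case by blast
next
  case (eng h1 h2)
  then show ?case
    using words_upto_mult[OF sym_gens_subset_carrier] by blast
qed

lemma sch_ball_Suc:
  assumes "C \<subseteq> carrier G" "T \<subseteq> carrier G"
  shows "sch_ball G T C (Suc r) = sch_ball G T C r \<union> (\<Union>D \<in> sch_ball G T C r. (\<lambda>x. D #> x) ` T)"
proof -
  have assoc: "C #> (w \<otimes> x) = (C #> w) #> x" if "w \<in> words_upto G T r" "x \<in> T" for w x
    using that assms words_upto_subset_carrier[OF assms(2)] by (simp add: coset_mult_assoc subset_iff)
  have "(\<lambda>w. C #> w) ` {w \<otimes> x | w x. w \<in> words_upto G T r \<and> x \<in> T}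
      = (\<Union>w \<in> words_upto G T r. (\<lambda>x. (C #> w) #> x) ` T)"
  proof (intro equalityI subsetI)
    fix y assume "y \<in> (\<lambda>w. C #> w) ` {w \<otimes> x | w x. w \<in> words_upto G T r \<and> x \<in> T}"
    then obtain w x where "w \<in> words_upto G T r" "x \<in> T" "y = C #> (w \<otimes> x)" by blast
    then show "y \<in> (\<Union>w \<in> words_upto G T r. (\<lambda>x. (C #> w) #> x) ` T)" using assoc by auto
  next
    fix y assume "y \<in> (\<Union>w \<in> words_upto G T r. (\<lambda>x. (C #> w) #> x) ` T)"
    then obtain w x where "w \<in> words_upto G T r" "x \<in> T" "y = (C #> w) #> x" by blast
    then show "y \<in> (\<lambda>w. C #> w) ` {w \<otimes> x | w x. w \<in> words_upto G T r \<and> x \<in> T}"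
      using assoc by auto
  qed
  then show ?thesis
    by (simp add: sch_ball_def image_Un)
qed

lemma sch_ball_subset_rcosets:
  assumes "subgroup K G" "C \<in> rcosets K" "T \<subseteq> carrier G"
  shows "sch_ball G T C r \<subseteq> rcosets K"
proof
  fix D assume "D \<in> sch_ball G T C r"
  then obtain w where w: "w \<in> carrier G" "D = C #> w"
    using words_upto_subset_carrier[OF assms(3)] unfolding sch_ball_def by blast
  obtain a where a: "a \<in> carrier G" "C = K #> a"
    using assms(2) unfolding RCOSETS_def by blast
  have "D = K #> (a \<otimes> w)"
    using w a assms(1) by (simp add: coset_mult_assoc subgroup.subset)
  then show "D \<in> rcosets K"
    using a w assms(1) by (simp add: rcosetsI subgroup.subset)
qed

subsection \<open>Automorphisms of the Schreier graph preserve balls\<close>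

lemma sch_aut_vertex: "sch_aut G K S f g \<Longrightarrow> C \<in> rcosets K \<Longrightarrow> f C \<in> rcosets K"
  unfolding sch_aut_def sch_vertices_def bij_betw_def by auto

lemma sch_aut_comp:
  assumes A1: "sch_aut G K S f1 g1" and A2: "sch_aut G K S f2 g2"
  shows "sch_aut G K S (f2 \<circ> f1) (g2 \<circ> g1)"
proof -
  have g1: "bij_betw g1 (sch_edges G K S) (sch_edges G K S)"
    using A1 unfolding sch_aut_def by blast
  have "sch_src (g2 (g1 e)) = f2 (f1 (sch_src e)) \<and>
        sch_tgt G (g2 (g1 e)) = f2 (f1 (sch_tgt G e)) \<and>
        sch_rev G (g2 (g1 e)) = g2 (g1 (sch_rev G e))"
    if e: "e \<in> sch_edges G K S" for e
  proof -
    have "g1 e \<in> sch_edges G K S" using bij_betwE[OF g1] e by blast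
    then show ?thesis using A1 A2 e unfolding sch_aut_def by simp
  qed
  moreover have "bij_betw (f2 \<circ> f1) (sch_vertices G K) (sch_vertices G K)"
    and "bij_betw (g2 \<circ> g1) (sch_edges G K S) (sch_edges G K S)"
    using A1 A2 unfolding sch_aut_def by (blast intro: bij_betw_trans)+
  ultimately show ?thesis
    unfolding sch_aut_def by simp
qed

text \<open>The edge bijection carries the edges leaving \<open>C\<close> onto those leaving \<open>f C\<close>; for the
  reverse inclusion, injectivity of \<open>f\<close> on vertices identifies the source of the preimage edge.\<close>

lemma sch_aut_neighbours:
  assumes K: "subgroup K G" and A: "sch_aut G K S f g" and C: "C \<in> rcosets K"
  shows "f ` (\<lambda>x. C #> x) ` sym_gens G S = (\<lambda>x. f C #> x) ` sym_gens G S"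
proof -
  have f: "inj_on f (rcosets K)"
    and g: "bij_betw g (sch_edges G K S) (sch_edges G K S)"
    and ends: "\<And>e. e \<in> sch_edges G K S \<Longrightarrow>
                 fst (g e) = f (fst e) \<and> fst (g e) #> snd (g e) = f (fst e #> snd e)"
    using A unfolding sch_aut_def sch_vertices_def sch_src_def sch_tgt_def bij_betw_def by auto
  show ?thesis
  proof (intro equalityI subsetI)
    fix y assume "y \<in> f ` (\<lambda>x. C #> x) ` sym_gens G S"
    then obtain x where x: "x \<in> sym_gens G S" "y = f (C #> x)" by blast
    then have e: "(C, x) \<in> sch_edges G K S" using C by (simp add: sch_edges_eq)
    obtain D x' where Dx': "g (C, x) = (D, x')" by fastforce
    have "(D, x') \<in> sch_edges G K S" using bij_betwE[OF g] e Dx' by metis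
    then have "x' \<in> sym_gens G S" by (simp add: sch_edges_eq)
    moreover have "y = f C #> x'" using ends[OF e] Dx' x by auto
    ultimately show "y \<in> (\<lambda>x. f C #> x) ` sym_gens G S" by blast
  next
    fix y assume "y \<in> (\<lambda>x. f C #> x) ` sym_gens G S"
    then obtain x' where x': "x' \<in> sym_gens G S" "y = f C #> x'" by blast
    then have "(f C, x') \<in> sch_edges G K S"
      using sch_aut_vertex[OF A C] by (simp add: sch_edges_eq)
    then obtain e where e: "e \<in> sch_edges G K S" "g e = (f C, x')"
      using bij_betw_imp_surj_on[OF g] by (metis imageE)
    obtain D x where Dx: "e = (D, x)" by fastforce
    have D: "D \<in> rcosets K" "x \<in> sym_gens G S" using e Dx by (simp_all add: sch_edges_eq)
    have "f D = f C" "f (D #> x) = y" using ends[OF e(1)] e Dx x' by auto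
    then have "D = C" using f C D(1) unfolding inj_on_def by blast
    then show "y \<in> f ` (\<lambda>x. C #> x) ` sym_gens G S"
      using \<open>f (D #> x) = y\<close> D(2) by blast
  qed
qed

lemma sch_aut_image_ball:
  assumes K: "subgroup K G" and A: "sch_aut G K S f g" and C: "C \<in> rcosets K"
  shows "f ` sch_ball G (sym_gens G S) C r = sch_ball G (sym_gens G S) (f C) r"
proof (induction r)
  case 0
  show ?case
    using subgroup.rcosets_carrier[OF K is_group] C sch_aut_vertex[OF A C]
    by (simp add: sch_ball_def)
next
  case (Suc r)
  have "f ` (\<lambda>x. D #> x) ` sym_gens G S = (\<lambda>x. f D #> x) ` sym_gens G S"
    if "D \<in> sch_ball G (sym_gens G S) C r" for D
    using that sch_ball_subset_rcosets[OF K C sym_gens_subset_carrier]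
    by (intro sch_aut_neighbours[OF K A]) blast
  moreover have "C \<subseteq> carrier G" "f C \<subseteq> carrier G"
    using subgroup.rcosets_carrier[OF K is_group] C sch_aut_vertex[OF A C] by auto
  ultimately show ?case
    using sym_gens_subset_carrier
    by (simp add: sch_ball_Suc image_Un image_UN flip: Suc)
qed

subsection \<open>Stabilisers of cosets\<close>

lemma subgroup_coset_stab:
  assumes "C \<subseteq> carrier G"
  shows "subgroup (coset_stab G C) G"
proof (rule subgroupI)
  show "coset_stab G C \<subseteq> carrier G" "coset_stab G C \<noteq> {}"
    using assms by (auto simp: coset_stab_def)
next
  fix x y assume "x \<in> coset_stab G C" "y \<in> coset_stab G C"
  then show "x \<otimes> y \<in> coset_stab G C"
    using assms by (simp add: coset_stab_def flip: coset_mult_assoc)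
next
  fix x assume x: "x \<in> coset_stab G C"
  then have "C #> inv x = (C #> x) #> inv x" by (simp add: coset_stab_def)
  also have "\<dots> = C #> (x \<otimes> inv x)"
    using x assms by (intro coset_mult_assoc) (auto simp: coset_stab_def)
  finally show "inv x \<in> coset_stab G C"
    using x assms by (simp add: coset_stab_def)
qed

lemma mem_coset_stab_rcoset:
  assumes K: "subgroup K G" and a: "a \<in> carrier G"
  shows "x \<in> coset_stab G (K #> a) \<longleftrightarrow> x \<in> carrier G \<and> a \<otimes> x \<otimes> inv a \<in> K"
proof (cases "x \<in> carrier G")
  case True
  have KG: "K \<subseteq> carrier G" using K by (rule subgroup.subset)
  have "K #> a #> x = K #> a \<longleftrightarrow> K #> (a \<otimes> x) = K #> a"
    using KG a True by (simp add: coset_mult_assoc)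
  also have "\<dots> \<longleftrightarrow> K #> (a \<otimes> x \<otimes> inv a) = K"
  proof
    assume "K #> (a \<otimes> x) = K #> a"
    then show "K #> (a \<otimes> x \<otimes> inv a) = K"
      by (rule coset_mult_inv2) (use KG a True in auto)
  next
    assume "K #> (a \<otimes> x \<otimes> inv a) = K"
    then show "K #> (a \<otimes> x) = K #> a"
      by (rule coset_mult_inv1) (use KG a True in auto)
  qed
  also have "\<dots> \<longleftrightarrow> a \<otimes> x \<otimes> inv a \<in> K"
  proof
    assume "K #> (a \<otimes> x \<otimes> inv a) = K"
    then show "a \<otimes> x \<otimes> inv a \<in> K"
      by (rule coset_join1) (use K a True in auto)
  qed (rule subgroup.rcos_const[OF K is_group])
  finally show ?thesis using True by (simp add: coset_stab_def)
qed (simp add: coset_stab_def)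

lemma coset_stab_rcoset:
  assumes K: "subgroup K G" and a: "a \<in> carrier G"
  shows "coset_stab G (K #> a) = (\<lambda>k. inv a \<otimes> k \<otimes> a) ` K"
proof (intro equalityI subsetI)
  fix x assume "x \<in> coset_stab G (K #> a)"
  then have x: "x \<in> carrier G" "a \<otimes> x \<otimes> inv a \<in> K"
    by (simp_all add: mem_coset_stab_rcoset[OF K a])
  have "x = inv a \<otimes> (a \<otimes> x \<otimes> inv a) \<otimes> a"
    using a x(1) by (simp add: m_assoc inv_mult_cancel_left)
  from image_eqI[where f = "\<lambda>k. inv a \<otimes> k \<otimes> a", OF this x(2)]
  show "x \<in> (\<lambda>k. inv a \<otimes> k \<otimes> a) ` K" .
next
  fix x assume "x \<in> (\<lambda>k. inv a \<otimes> k \<otimes> a) ` K"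
  then obtain k where k: "k \<in> K" "x = inv a \<otimes> k \<otimes> a" by blast
  have kG: "k \<in> carrier G" using subgroup.mem_carrier[OF K k(1)] .
  have "a \<otimes> x \<otimes> inv a = k"
    using k a kG by (simp add: m_assoc mult_inv_cancel_left)
  with k a kG show "x \<in> coset_stab G (K #> a)"
    by (simp add: mem_coset_stab_rcoset[OF K a])
qed

lemma card_coset_stab_rcoset:
  assumes K: "subgroup K G" and a: "a \<in> carrier G"
  shows "card (coset_stab G (K #> a)) = card K"
proof -
  have "inj_on (\<lambda>k. inv a \<otimes> k \<otimes> a) K"
    using a subgroup.mem_carrier[OF K] by (simp add: inj_on_def)
  then show ?thesis
    by (simp add: coset_stab_rcoset[OF K a] card_image)
qed

subsection \<open>Left multiplication by elements normalising \<open>K\<close>\<close>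

lemma normalizer_lcoset_rcoset:
  assumes "subgroup K G" "n \<in> carrier G" "n <# K = K #> n" "a \<in> carrier G"
  shows "n <# (K #> a) = K #> (n \<otimes> a)"
  using assms by (simp add: coset_assoc coset_mult_assoc subgroup.subset)

lemma normalizer_inv:
  assumes K: "subgroup K G" and n: "n \<in> carrier G" and nK: "n <# K = K #> n"
  shows "inv n <# K = K #> inv n"
proof -
  have KG: "K \<subseteq> carrier G" using K by (rule subgroup.subset)
  have "inv n <# K = inv n <# ((K #> n) #> inv n)"
    using KG n by (simp add: coset_mult_assoc)
  also have "\<dots> = (inv n <# (n <# K)) #> inv n"
    using KG n by (simp add: coset_assoc r_coset_subset_G nK)
  also have "\<dots> = K #> inv n"
    using KG n by (simp add: lcos_m_assoc lcos_mult_one)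
  finally show ?thesis .
qed

lemma normalizer_lcoset_in_rcosets:
  assumes "subgroup K G" "n \<in> carrier G" "n <# K = K #> n" "C \<in> rcosets K"
  shows "n <# C \<in> rcosets K"
proof -
  obtain a where "a \<in> carrier G" "C = K #> a"
    using assms(4) unfolding RCOSETS_def by blast
  with assms show ?thesis
    by (simp add: normalizer_lcoset_rcoset rcosetsI subgroup.subset)
qed

lemma normalizer_lcoset_label_aut:
  assumes K: "subgroup K G" and n: "n \<in> carrier G" and nK: "n <# K = K #> n"
  shows "sch_label_aut G K S (\<lambda>C. n <# C) (\<lambda>e. (n <# fst e, snd e))"
proof -
  have closed: "m <# C \<in> rcosets K" if "m \<in> {n, inv n}" "C \<in> rcosets K" for m C
    using that normalizer_lcoset_in_rcosets[OF K] n nK normalizer_inv[OF K n nK] by auto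
  have cancel: "inv n <# (n <# C) = C" "n <# (inv n <# C) = C" if "C \<in> rcosets K" for C
    using that n subgroup.rcosets_carrier[OF K is_group] by (simp_all add: lcos_m_assoc lcos_mult_one)
  have "bij_betw (\<lambda>C. n <# C) (rcosets K) (rcosets K)"
    by (rule bij_betw_byWitness[where f' = "\<lambda>C. inv n <# C"]) (auto simp: closed cancel)
  moreover have "bij_betw (\<lambda>e. (n <# fst e, snd e)) (sch_edges G K S) (sch_edges G K S)"
    by (rule bij_betw_byWitness[where f' = "\<lambda>e. (inv n <# fst e, snd e)"])
      (auto simp: sch_edges_eq closed cancel)
  moreover have "(n <# C) #> x = n <# (C #> x)" if "(C, x) \<in> sch_edges G K S" for C x
    using that n subgroup.rcosets_carrier[OF K is_group] sym_gens_subset_carrier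
    by (intro coset_assoc[symmetric]) (auto simp: sch_edges_eq)
  ultimately show ?thesis
    unfolding sch_label_aut_def sch_aut_def sch_vertices_def sch_label_def
      sch_src_def sch_tgt_def sch_rev_def
    by auto
qed

lemma conj_in_subgroup_if_coset_stab_subset:
  assumes K: "subgroup K G" and a: "a \<in> carrier G" and b: "b \<in> carrier G"
    and sub: "coset_stab G (K #> a) \<subseteq> coset_stab G (K #> b)" and k: "k \<in> K"
  shows "b \<otimes> inv a \<otimes> k \<otimes> (a \<otimes> inv b) \<in> K"
proof -
  have kG: "k \<in> carrier G" using subgroup.mem_carrier[OF K k] .
  have "inv a \<otimes> k \<otimes> a \<in> coset_stab G (K #> b)"
    using sub k by (auto simp: coset_stab_rcoset[OF K a])
  then have "b \<otimes> (inv a \<otimes> k \<otimes> a) \<otimes> inv b \<in> K"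
    by (simp add: mem_coset_stab_rcoset[OF K b])
  moreover have "b \<otimes> (inv a \<otimes> k \<otimes> a) \<otimes> inv b = b \<otimes> inv a \<otimes> k \<otimes> (a \<otimes> inv b)"
    using a b kG by (simp add: m_assoc)
  ultimately show ?thesis by simp
qed

lemma normalizer_if_conj_closed:
  assumes K: "subgroup K G" and n: "n \<in> carrier G"
    and conj: "\<And>k. k \<in> K \<Longrightarrow> n \<otimes> k \<otimes> inv n \<in> K"
    and conj_inv: "\<And>k. k \<in> K \<Longrightarrow> inv n \<otimes> k \<otimes> n \<in> K"
  shows "n <# K = K #> n"
proof (intro equalityI subsetI)
  fix y assume "y \<in> n <# K"
  then obtain k where k: "k \<in> K" "y = n \<otimes> k" unfolding l_coset_def by blast
  have "y = (n \<otimes> k \<otimes> inv n) \<otimes> n"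
    using k n subgroup.mem_carrier[OF K k(1)] by (simp add: m_assoc)
  then show "y \<in> K #> n"
    using conj[OF k(1)] unfolding r_coset_def by blast
next
  fix y assume "y \<in> K #> n"
  then obtain k where k: "k \<in> K" "y = k \<otimes> n" unfolding r_coset_def by blast
  have "y = n \<otimes> (inv n \<otimes> k \<otimes> n)"
    using k n subgroup.mem_carrier[OF K k(1)] by (simp add: m_assoc mult_inv_cancel_left)
  then show "y \<in> n <# K"
    using conj_inv[OF k(1)] unfolding l_coset_def by blast
qed

lemma S_orbit_if_coset_stab_eq:
  assumes K: "subgroup K G" and C: "C \<in> rcosets K" and D: "D \<in> rcosets K"
    and eq: "coset_stab G C = coset_stab G D"
  shows "D \<in> S_orbit G K S C"
proof -
  obtain a b where a: "a \<in> carrier G" "C = K #> a" and b: "b \<in> carrier G" "D = K #> b"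
    using C D unfolding RCOSETS_def by blast
  \<comment> \<open>\<open>a\<inverse> K a = b\<inverse> K b\<close> says exactly that \<open>b a\<inverse>\<close> normalises \<open>K\<close>.\<close>
  define n where "n = b \<otimes> inv a"
  have n: "n \<in> carrier G" using a b by (simp add: n_def)
  have inv_n: "inv n = a \<otimes> inv b" using a b by (simp add: n_def inv_mult_group)
  have nK: "n <# K = K #> n"
  proof (rule normalizer_if_conj_closed[OF K n])
    fix k assume k: "k \<in> K"
    show "n \<otimes> k \<otimes> inv n \<in> K"
      unfolding inv_n unfolding n_def
      using conj_in_subgroup_if_coset_stab_subset[OF K a(1) b(1) _ k] eq a(2) b(2) by simp
    show "inv n \<otimes> k \<otimes> n \<in> K"
      unfolding inv_n unfolding n_def
      using conj_in_subgroup_if_coset_stab_subset[OF K b(1) a(1) _ k] eq a(2) b(2) by simp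
  qed
  have "n <# C = D"
    using normalizer_lcoset_rcoset[OF K n nK a(1)] a b
    by (simp add: n_def m_assoc)
  then show ?thesis
    unfolding S_orbit_def using normalizer_lcoset_label_aut[OF K n nK] by blast
qed

lemma coset_stab_eq_if_common_nontrivial:
  assumes K: "subgroup K G" and p: "Factorial_Ring.prime (card K)"
    and C: "C \<in> rcosets K" and D: "D \<in> rcosets K"
    and c: "c \<in> coset_stab G C" "c \<in> coset_stab G D" "c \<noteq> \<one>"
  shows "coset_stab G C = coset_stab G D"
proof -
  have stab: "subgroup (coset_stab G E) G" "card (coset_stab G E) = card K"
    if "E \<in> rcosets K" for E
    using that subgroup_coset_stab subgroup.rcosets_carrier[OF K is_group]
      card_coset_stab_rcoset[OF K] unfolding RCOSETS_def by auto
  show ?thesis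
    using prime_order_subgroup_subset stab[OF C] stab[OF D] p c by (metis subset_antisym)
qed

subsection \<open>Orbits\<close>

lemma finite_word_quotients: "finite W \<Longrightarrow> finite (word_quotients G W)"
proof -
  assume "finite W"
  moreover have "word_quotients G W \<subseteq> (\<lambda>(w1, w2). w1 \<otimes> inv w2) ` (W \<times> W)"
    unfolding word_quotients_def by auto
  ultimately show ?thesis
    by (meson finite_SigmaI finite_imageI finite_subset)
qed

lemma one_notin_word_quotients:
  assumes "W \<subseteq> carrier G"
  shows "\<one> \<notin> word_quotients G W"
proof
  assume "\<one> \<in> word_quotients G W"
  then obtain w1 w2 where w: "w1 \<in> W" "w2 \<in> W" "w1 \<noteq> w2" "w1 \<otimes> inv w2 = \<one>"
    unfolding word_quotients_def by auto
  moreover have "w1 \<in> carrier G" "w2 \<in> carrier G"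
    using w assms by blast+
  ultimately show False by (simp add: inv_solve_right')
qed

lemma coset_stab_meets_word_quotients_if_card_sch_ball_less:
  assumes C: "C \<subseteq> carrier G" and T: "T \<subseteq> carrier G"
    and less: "card (sch_ball G T C r) < card (words_upto G T r)"
  shows "coset_stab G C \<inter> word_quotients G (words_upto G T r) \<noteq> {}"
proof -
  have "\<not> inj_on (\<lambda>w. C #> w) (words_upto G T r)"
    using less card_image unfolding sch_ball_def by fastforce
  then obtain w1 w2 where w: "w1 \<in> words_upto G T r" "w2 \<in> words_upto G T r"
    "w1 \<noteq> w2" "C #> w1 = C #> w2"
    unfolding inj_on_def by blast
  then have "w1 \<in> carrier G" "w2 \<in> carrier G"
    using words_upto_subset_carrier[OF T] by auto
  with w(4) C have "w1 \<otimes> inv w2 \<in> coset_stab G C"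
    by (simp add: coset_stab_def coset_mult_inv2)
  moreover have "w1 \<otimes> inv w2 \<in> word_quotients G (words_upto G T r)"
    unfolding word_quotients_def using w(1-3) by blast
  ultimately show ?thesis by blast
qed

lemma card_sch_ball_less_if_coset_stab:
  assumes T: "finite T" and C: "C \<subseteq> carrier G"
    and c: "c \<in> coset_stab G C" "c \<noteq> \<one>" "c \<in> words_upto G T r"
  shows "card (sch_ball G T C r) < card (words_upto G T r)"
proof -
  have "C #> c = C #> \<one>" using c(1) C by (simp add: coset_stab_def)
  then have "\<not> inj_on (\<lambda>w. C #> w) (words_upto G T r)"
    using c(2,3) one_in_words_upto unfolding inj_on_def by blast
  then show ?thesis
    using finite_words_upto[OF T] card_image_le eq_card_imp_inj_on
    unfolding sch_ball_def by (metis le_neq_implies_less)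
qed

lemma exists_nontrivial_coset_stab:
  assumes K: "subgroup K G" and p: "Factorial_Ring.prime (card K)" and v: "v \<in> rcosets K"
  shows "\<exists>c \<in> coset_stab G v. c \<noteq> \<one>"
proof (rule ccontr)
  assume "\<not> ?thesis"
  then have "card (coset_stab G v) \<le> card {\<one>}"
    by (intro card_mono) auto
  moreover obtain a where "a \<in> carrier G" "v = K #> a"
    using v unfolding RCOSETS_def by blast
  then have "card (coset_stab G v) = card K"
    using card_coset_stab_rcoset[OF K] by simp
  ultimately show False
    using prime_gt_1_nat[OF p] by simp
qed

lemma aut_orbit_subset_rcosets: "v \<in> rcosets K \<Longrightarrow> aut_orbit G K S v \<subseteq> rcosets K"
  unfolding aut_orbit_def using sch_aut_vertex by blast

lemma card_sch_ball_aut_orbit: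
  assumes K: "subgroup K G" and v: "v \<in> rcosets K" and u: "u \<in> aut_orbit G K S v"
  shows "card (sch_ball G (sym_gens G S) u r) = card (sch_ball G (sym_gens G S) v r)"
proof -
  obtain f g where fg: "sch_aut G K S f g" "u = f v"
    using u unfolding aut_orbit_def by blast
  have "inj_on f (rcosets K)"
    using fg(1) unfolding sch_aut_def sch_vertices_def bij_betw_def by blast
  then have "inj_on f (sch_ball G (sym_gens G S) v r)"
    using sch_ball_subset_rcosets[OF K v sym_gens_subset_carrier] by (rule inj_on_subset)
  then have "card (f ` sch_ball G (sym_gens G S) v r) = card (sch_ball G (sym_gens G S) v r)"
    by (rule card_image)
  then show ?thesis
    using sch_aut_image_ball[OF K fg(1) v] fg(2) by simp
qed

lemma S_orbit_subset_aut_orbit: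
  assumes "w \<in> aut_orbit G K S v"
  shows "S_orbit G K S w \<subseteq> aut_orbit G K S v"
proof
  fix u assume "u \<in> S_orbit G K S w"
  then obtain f2 g2 where "sch_aut G K S f2 g2" "u = f2 w"
    unfolding S_orbit_def sch_label_aut_def by blast
  moreover obtain f1 g1 where "sch_aut G K S f1 g1" "w = f1 v"
    using assms unfolding aut_orbit_def by blast
  ultimately have "sch_aut G K S (f2 \<circ> f1) (g2 \<circ> g1)" "u = (f2 \<circ> f1) v"
    using sch_aut_comp by simp_all
  then show "u \<in> aut_orbit G K S v"
    unfolding aut_orbit_def by blast
qed

lemma aut_orbit_coset_stabs_meet_finite_set:
  assumes S: "finite S" "S \<subseteq> carrier G" "generate G S = carrier G"
    and K: "subgroup K G" and p: "Factorial_Ring.prime (card K)" and v: "v \<in> rcosets K"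
  shows "\<exists>P. finite P \<and> \<one> \<notin> P \<and> (\<forall>u \<in> aut_orbit G K S v. coset_stab G u \<inter> P \<noteq> {})"
proof -
  define T where "T = sym_gens G S"
  have T: "finite T" "T \<subseteq> carrier G"
    unfolding T_def using finite_sym_gens[OF S(1)] sym_gens_subset_carrier by auto
  have vG: "v \<subseteq> carrier G" using subgroup.rcosets_carrier[OF K is_group v] .
  obtain c where c: "c \<in> coset_stab G v" "c \<noteq> \<one>"
    using exists_nontrivial_coset_stab[OF K p v] by blast
  then have "c \<in> generate G S" using S(3) by (simp add: coset_stab_def)
  then obtain r where r: "c \<in> words_upto G T r"
    using generate_imp_in_words_upto[OF S(2)] unfolding T_def by blast
  show ?thesis
  proof (intro exI conjI ballI)
    show "finite (word_quotients G (words_upto G T r))"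
      using finite_word_quotients[OF finite_words_upto[OF T(1)]] .
    show "\<one> \<notin> word_quotients G (words_upto G T r)"
      using one_notin_word_quotients[OF words_upto_subset_carrier[OF T(2)]] .
    fix u assume u: "u \<in> aut_orbit G K S v"
    show "coset_stab G u \<inter> word_quotients G (words_upto G T r) \<noteq> {}"
    proof (rule coset_stab_meets_word_quotients_if_card_sch_ball_less[OF _ T(2)])
      show "u \<subseteq> carrier G"
        using subgroup.rcosets_carrier[OF K is_group] aut_orbit_subset_rcosets[OF v] u by blast
      show "card (sch_ball G T u r) < card (words_upto G T r)"
        using card_sch_ball_aut_orbit[OF K v u] card_sch_ball_less_if_coset_stab[OF T(1) vG c r]
        unfolding T_def by simp
    qed
  qed
qed

lemma aut_orbit_eq_Union_S_orbits:
  assumes K: "subgroup K G" and p: "Factorial_Ring.prime (card K)" and v: "v \<in> rcosets K"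
    and P: "finite P" "\<one> \<notin> P" "\<forall>u \<in> aut_orbit G K S v. coset_stab G u \<inter> P \<noteq> {}"
  shows "\<exists>F. finite F \<and> F \<subseteq> rcosets K \<and> aut_orbit G K S v = (\<Union>w \<in> F. S_orbit G K S w)"
proof -
  define rep where "rep c = (SOME u. u \<in> aut_orbit G K S v \<and> c \<in> coset_stab G u)" for c
  define F where "F = rep ` {c \<in> P. \<exists>u \<in> aut_orbit G K S v. c \<in> coset_stab G u}"
  have rep: "rep c \<in> aut_orbit G K S v \<and> c \<in> coset_stab G (rep c)"
    if "\<exists>u \<in> aut_orbit G K S v. c \<in> coset_stab G u" for c
    unfolding rep_def using someI_ex that by (metis (mono_tags, lifting))
  have "finite F" unfolding F_def using P(1) by simp
  moreover have "F \<subseteq> aut_orbit G K S v" unfolding F_def using rep by blast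
  then have "F \<subseteq> rcosets K" using aut_orbit_subset_rcosets[OF v] by blast
  moreover have "aut_orbit G K S v \<subseteq> (\<Union>w \<in> F. S_orbit G K S w)"
  proof
    fix u assume u: "u \<in> aut_orbit G K S v"
    then obtain c where c: "c \<in> P" "c \<in> coset_stab G u" using P(3) by blast
    then have "c \<noteq> \<one>" using P(2) by blast
    have "coset_stab G (rep c) = coset_stab G u"
      using coset_stab_eq_if_common_nontrivial[OF K p] rep u c \<open>c \<noteq> \<one>\<close>
        aut_orbit_subset_rcosets[OF v] by blast
    then have "u \<in> S_orbit G K S (rep c)"
      using S_orbit_if_coset_stab_eq[OF K] rep u c aut_orbit_subset_rcosets[OF v] by blast
    moreover have "rep c \<in> F" unfolding F_def using c u by blast
    ultimately show "u \<in> (\<Union>w \<in> F. S_orbit G K S w)" by blast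
  qed
  moreover have "(\<Union>w \<in> F. S_orbit G K S w) \<subseteq> aut_orbit G K S v"
    using S_orbit_subset_aut_orbit \<open>F \<subseteq> aut_orbit G K S v\<close> by blast
  ultimately show ?thesis by blast
qed

end

theorem proposition6p6:
  fixes G :: "('a, 'b) monoid_scheme" and K S :: "'a set"
  assumes "group G"
    and "finite S" and "S \<subseteq> carrier G" and "generate G S = carrier G"
    and "subgroup K G" and "\<exists>h \<in> carrier G. K = generate G {h}"
    and "Factorial_Ring.prime (card K)"
  shows "\<forall>v \<in> sch_vertices G K. \<exists>F. finite F \<and> F \<subseteq> sch_vertices G K \<and>
           aut_orbit G K S v = (\<Union>w \<in> F. S_orbit G K S w)"
proof
  interpret group G by fact
  fix v assume "v \<in> sch_vertices G K"
  then have v: "v \<in> rcosets\<^bsub>G\<^esub> K" by (simp add: sch_vertices_def)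
  obtain P where "finite P" "\<one>\<^bsub>G\<^esub> \<notin> P" "\<forall>u \<in> aut_orbit G K S v. coset_stab G u \<inter> P \<noteq> {}"
    using aut_orbit_coset_stabs_meet_finite_set[OF assms(2-5,7) v] by blast
  then show "\<exists>F. finite F \<and> F \<subseteq> sch_vertices G K \<and>
               aut_orbit G K S v = (\<Union>w \<in> F. S_orbit G K S w)"
    using aut_orbit_eq_Union_S_orbits[OF assms(5,7) v] by (simp add: sch_vertices_def)
qed

end
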